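(* $t(K(11,4))=\frac{7}{4}$. Moreover, if $S$ is a vertex cut of $K(11,4)$ such that $\frac{|S|}{c(K(11,4)\setminus S)} = \frac{7}{4}$, then $S$ is the complement of a maximum independent set of $K(11,4)$.
   Context: The Kneser graph $K(n,k)$ has as vertices the $k$-element subsets of $[n]=\{1,\dots,n\}$, two vertices being adjacent iff they are disjoint. A vertex cut is a set $S$ of vertices whose removal disconnects the graph; $c(G\setminus S)$ is the number of connected components after deleting $S$; the toughness is $t(G)=\min_S |S|/c(G\setminus S)$ over vertex cuts $S$. *)

theory Defs
  imports Complex_Main
begin

definition kneser_vertices :: "nat \<Rightarrow> nat \<Rightarrow> nat set set" where
  "kneser_vertices n k = {A. A \<subseteq> {1..n} \<and> card A = k}"

definition kneser_adj :: "nat set \<Rightarrow> nat set \<Rightarrow> bool" where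
  "kneser_adj A B \<longleftrightarrow> A \<inter> B = {}"

definition conn_rel :: "('a \<Rightarrow> 'a \<Rightarrow> bool) \<Rightarrow> 'a set \<Rightarrow> ('a \<times> 'a) set" where
  "conn_rel E W = {(x, y). x \<in> W \<and> y \<in> W \<and> (\<lambda>a b. a \<in> W \<and> b \<in> W \<and> E a b)\<^sup>*\<^sup>* x y}"

definition num_components :: "'a set \<Rightarrow> ('a \<Rightarrow> 'a \<Rightarrow> bool) \<Rightarrow> 'a set \<Rightarrow> nat" where
  "num_components V E S = card ((V - S) // conn_rel E (V - S))"

definition vertex_cut :: "'a set \<Rightarrow> ('a \<Rightarrow> 'a \<Rightarrow> bool) \<Rightarrow> 'a set \<Rightarrow> bool" where
  "vertex_cut V E S \<longleftrightarrow> S \<subseteq> V \<and> num_components V E S \<ge> 2"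

definition toughness :: "'a set \<Rightarrow> ('a \<Rightarrow> 'a \<Rightarrow> bool) \<Rightarrow> real" where
  "toughness V E = Inf {real (card S) / real (num_components V E S) | S. vertex_cut V E S}"

definition independent_set :: "'a set \<Rightarrow> ('a \<Rightarrow> 'a \<Rightarrow> bool) \<Rightarrow> 'a set \<Rightarrow> bool" where
  "independent_set V E I \<longleftrightarrow> I \<subseteq> V \<and> (\<forall>x\<in>I. \<forall>y\<in>I. \<not> E x y)"

definition maximum_independent_set :: "'a set \<Rightarrow> ('a \<Rightarrow> 'a \<Rightarrow> bool) \<Rightarrow> 'a set \<Rightarrow> bool" where
  "maximum_independent_set V E I \<longleftrightarrow> independent_set V E I \<and>
     (\<forall>J. independent_set V E J \<longrightarrow> card J \<le> card I)"

end

(* K(11,4) is 35-regular on 330 vertices with adjacency eigenvalues 35, -20, 10, -4, 1.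
   For a vertex cut S, evaluate the inequality f^T A f + 20 |f|^2 >= (55/330) (sum f)^2, which
   says that -20 is the least eigenvalue, at the vector that is 1 on S and a suitably chosen
   constant on each component C of G - S. This gives
     sum_C |C| e(C,S) / (55 |C| - e(C,S)) <= |S|.
   Since 10 is the second largest eigenvalue, a component spans few edges, and |C| <= 330 - 36;
   together these make every term at least 7/4, with equality only for a single vertex. Hence
   |S| >= 7/4 c(G - S), and equality forces G - S to be an independent set of size
   120 = 330 * 20 / 55, the Hoffman ratio bound; the 4-sets through a fixed point attain it.
   Both eigenvalue bounds are certified by writing the corresponding kernels as nonnegative
   combinations of zonal spherical functions of the Johnson scheme J(11,4), each of which is
   a positive multiple of a Gram kernel. *)

theory Submission
  imports Defs
begin

section \<open>Connected components of induced subgraphs\<close>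

lemma equiv_conn_rel:
  assumes "symp E"
  shows "equiv W (conn_rel E W)"
proof (rule equivI)
  have "symp (\<lambda>a b. a \<in> W \<and> b \<in> W \<and> E a b)"
    using assms by (auto simp: symp_def)
  then show "sym (conn_rel E W)"
    unfolding conn_rel_def sym_def by (auto dest: symp_rtranclp[THEN sympD])
  show "trans (conn_rel E W)"
    unfolding conn_rel_def trans_def by (auto intro: rtranclp_trans)
qed (auto simp: conn_rel_def refl_on_def)

lemma conn_rel_class_closed:
  assumes "C \<in> W // conn_rel E W" "x \<in> C" "y \<in> W" "E x y"
  shows "y \<in> C"
proof -
  obtain x0 where "C = conn_rel E W `` {x0}"
    using assms(1) by (rule quotientE)
  then show ?thesis
    using assms(2-4) unfolding conn_rel_def
    by (auto intro: rtranclp.rtrancl_into_rtrancl)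
qed

definition components :: "'a set \<Rightarrow> ('a \<Rightarrow> 'a \<Rightarrow> bool) \<Rightarrow> 'a set \<Rightarrow> 'a set set" where
  "components V E S = (V - S) // conn_rel E (V - S)"

lemma components_complement_independent:
  assumes "independent_set V E I"
  shows "components V E (V - I) = (\<lambda>x. {x}) ` I"
proof -
  have I: "I \<subseteq> V" and no_edge: "\<And>x y. x \<in> I \<Longrightarrow> y \<in> I \<Longrightarrow> \<not> E x y"
    using assms unfolding independent_set_def by auto
  have "(\<lambda>a b. a \<in> I \<and> b \<in> I \<and> E a b) = (\<lambda>_ _. False)"
    using no_edge by blast
  then have "conn_rel E I = Id_on I"
    unfolding conn_rel_def by (auto elim: rtranclp.cases)
  moreover have "V - (V - I) = I"
    using I by blast
  ultimately show ?thesis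
    unfolding components_def quotient_def by auto
qed

section \<open>Regular graphs\<close>

(* adj_count counts ordered pairs, so adj_count E C C is twice the number of edges inside C;
   adj_form V E f is the quadratic form f^T A f of the adjacency matrix A. *)
definition adj_count :: "('a \<Rightarrow> 'a \<Rightarrow> bool) \<Rightarrow> 'a set \<Rightarrow> 'a set \<Rightarrow> real" where
  "adj_count E A B = (\<Sum>x\<in>A. \<Sum>y\<in>B. of_bool (E x y))"

lemma adj_count_nonneg: "0 \<le> adj_count E A B"
  unfolding adj_count_def by (intro sum_nonneg) auto

definition adj_form :: "'a set \<Rightarrow> ('a \<Rightarrow> 'a \<Rightarrow> bool) \<Rightarrow> ('a \<Rightarrow> real) \<Rightarrow> real" where
  "adj_form V E f = (\<Sum>x\<in>V. \<Sum>y\<in>V. of_bool (E x y) * f x * f y)"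

lemma adj_form_kernel_expand:
  assumes "finite V"
  shows "(\<Sum>x\<in>V. \<Sum>y\<in>V. f x * f y * (a * of_bool (E x y) + b * of_bool (x = y) + c)) =
    a * adj_form V E f + b * (\<Sum>x\<in>V. (f x)\<^sup>2) + c * (\<Sum>x\<in>V. f x)\<^sup>2"
proof -
  have "(\<Sum>x\<in>V. \<Sum>y\<in>V. f x * f y * (a * of_bool (E x y) + b * of_bool (x = y) + c)) =
    a * adj_form V E f + b * (\<Sum>x\<in>V. \<Sum>y\<in>V. of_bool (x = y) * (f x * f y)) +
    c * (\<Sum>x\<in>V. \<Sum>y\<in>V. f x * f y)"
    unfolding adj_form_def
    by (simp add: algebra_simps sum.distrib sum_distrib_left del: sum_of_bool_mult_eq)
  also have "(\<Sum>x\<in>V. \<Sum>y\<in>V. of_bool (x = y) * (f x * f y)) = (\<Sum>x\<in>V. (f x)\<^sup>2)"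
    using assms by (simp add: power2_eq_square)
  also have "(\<Sum>x\<in>V. \<Sum>y\<in>V. f x * f y) = (\<Sum>x\<in>V. f x)\<^sup>2"
    by (simp add: power2_eq_square sum_product)
  finally show ?thesis .
qed

locale regular_graph =
  fixes V :: "'a set" and E :: "'a \<Rightarrow> 'a \<Rightarrow> bool" and d :: nat
  assumes finite_vertices: "finite V"
    and symmetric: "symp E"
    and irreflexive: "x \<in> V \<Longrightarrow> \<not> E x x"
    and degree: "x \<in> V \<Longrightarrow> card {y \<in> V. E x y} = d"
begin

lemma adj_count_commute: "adj_count E A B = adj_count E B A"
proof -
  have "adj_count E A B = (\<Sum>y\<in>B. \<Sum>x\<in>A. of_bool (E x y))"
    unfolding adj_count_def by (rule sum.swap)
  also have "\<dots> = adj_count E B A"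
    unfolding adj_count_def using symmetric by (intro sum.cong refl) (auto dest: sympD)
  finally show ?thesis .
qed

lemma sum_adj_eq_degree: "x \<in> V \<Longrightarrow> (\<Sum>y\<in>V. of_bool (E x y)) = real d"
  using finite_vertices degree by (simp add: Collect_conj_eq Int_commute)

lemma equiv_components: "equiv (V - S) (conn_rel E (V - S))"
  by (rule equiv_conn_rel[OF symmetric])

lemma component_subset: "C \<in> components V E S \<Longrightarrow> C \<subseteq> V - S"
  unfolding components_def using equiv_components by (rule in_quotient_imp_subset)

lemma component_nonempty: "C \<in> components V E S \<Longrightarrow> C \<noteq> {}"
  unfolding components_def using equiv_components by (rule in_quotient_imp_non_empty)

lemma finite_component: "C \<in> components V E S \<Longrightarrow> finite C"
  using component_subset finite_vertices by (meson finite_Diff finite_subset)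

lemma card_component_pos: "C \<in> components V E S \<Longrightarrow> 0 < card C"
  using component_nonempty finite_component by (simp add: card_gt_0_iff)

lemma finite_components: "finite (components V E S)"
  unfolding components_def
  by (rule finite_quotient[OF _ equiv_type[OF equiv_components]]) (simp add: finite_vertices)

lemma components_disjoint:
  "C \<in> components V E S \<Longrightarrow> C' \<in> components V E S \<Longrightarrow> C \<noteq> C' \<Longrightarrow> C \<inter> C' = {}"
  unfolding components_def using quotient_disj[OF equiv_components] by blast

lemma component_closed:
  "C \<in> components V E S \<Longrightarrow> x \<in> C \<Longrightarrow> y \<in> V - S \<Longrightarrow> E x y \<Longrightarrow> y \<in> C"
  unfolding components_def by (rule conn_rel_class_closed)

lemma component_eq_class:
  assumes "C \<in> components V E S" "x \<in> C"
  shows "conn_rel E (V - S) `` {x} = C"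
proof -
  obtain x0 where "C = conn_rel E (V - S) `` {x0}"
    using assms(1) unfolding components_def by (rule quotientE)
  then show ?thesis
    using assms(2) equiv_class_eq[OF equiv_components] by force
qed

lemma sum_over_components:
  assumes "S \<subseteq> V"
  shows "(\<Sum>x\<in>V. g x) = (\<Sum>x\<in>S. g x) + (\<Sum>C\<in>components V E S. \<Sum>x\<in>C. g x)"
proof -
  have "(\<Sum>x\<in>V. g x) = (\<Sum>x\<in>V - S. g x) + (\<Sum>x\<in>S. g x)"
    by (rule sum.subset_diff[OF assms finite_vertices])
  also have "(\<Sum>x\<in>V - S. g x) = (\<Sum>x\<in>\<Union>(components V E S). g x)"
    by (simp only: components_def Union_quotient[OF equiv_components])
  also have "\<dots> = (\<Sum>C\<in>components V E S. \<Sum>x\<in>C. g x)"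
    using sum.Union_disjoint[of "components V E S" g] finite_component components_disjoint
    by auto
  finally show ?thesis
    by (simp only: add.commute)
qed

lemma sum_adj_component:
  assumes "C \<in> components V E S" "x \<in> C"
  shows "(\<Sum>y\<in>V - S. of_bool (E x y) * g y) = (\<Sum>y\<in>C. of_bool (E x y) * g y :: real)"
proof (rule sum.mono_neutral_right)
  show "\<forall>y\<in>V - S - C. of_bool (E x y) * g y = 0"
    using component_closed[OF assms] by auto
qed (use finite_vertices component_subset[OF assms(1)] in auto)

lemma adj_count_component:
  assumes "S \<subseteq> V" "C \<in> components V E S"
  shows "adj_count E C S + adj_count E C C = real d * card C"
proof -
  have "(\<Sum>y\<in>S. of_bool (E x y)) + (\<Sum>y\<in>C. of_bool (E x y)) = real d" if "x \<in> C" for x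
  proof -
    have "x \<in> V"
      using that component_subset[OF assms(2)] by auto
    then have "real d = (\<Sum>y\<in>S. of_bool (E x y)) + (\<Sum>y\<in>V - S. of_bool (E x y) * 1)"
      using sum_adj_eq_degree[OF \<open>x \<in> V\<close>]
        sum.subset_diff[OF assms(1) finite_vertices, of "\<lambda>y. of_bool (E x y) :: real"]
      by simp
    then show ?thesis
      using sum_adj_component[OF assms(2) that, of "\<lambda>_. 1"] by simp
  qed
  then show ?thesis
    unfolding adj_count_def sum.distrib[symmetric] by simp
qed

lemma card_component_le:
  assumes "2 \<le> card (components V E S)" "C \<in> components V E S"
  shows "card C + d + 1 \<le> card V"
proof -
  have "\<not> card (components V E S) \<le> Suc 0"
    using assms(1) by simp
  then obtain C' where C': "C' \<in> components V E S" "C' \<noteq> C"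
    using assms(2) card_le_Suc0_iff_eq[OF finite_components] by blast
  then obtain z where z: "z \<in> C'"
    using component_nonempty by blast
  have zV: "z \<in> V"
    using z component_subset[OF C'(1)] by blast
  have disj: "C \<inter> C' = {}"
    using components_disjoint[OF assms(2) C'(1)] C'(2) by blast
  have CV: "C \<subseteq> V - S"
    by (rule component_subset[OF assms(2)])
  have "y \<notin> C" if "E z y" for y
    using component_closed[OF C'(1) z, of y] that disj CV by blast
  then have "C \<subseteq> V - insert z {y \<in> V. E z y}"
    using z disj CV by blast
  then have "card C \<le> card (V - insert z {y \<in> V. E z y})"
    using finite_vertices by (intro card_mono) auto
  also have "\<dots> = card V - (d + 1)"
    using zV irreflexive degree finite_vertices by (subst card_Diff_subset) auto
  finally have "card C \<le> card V - (d + 1)" .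
  moreover have "d + 1 \<le> card V"
    using zV irreflexive degree finite_vertices card_mono[of V "insert z {y \<in> V. E z y}"] by auto
  ultimately show ?thesis
    by linarith
qed

lemma adj_count_le:
  assumes "C \<subseteq> V"
  shows "adj_count E C C \<le> real (card C) * (real (card C) - 1)"
proof -
  have fin: "finite C"
    using assms finite_vertices finite_subset by blast
  have "(\<Sum>y\<in>C. of_bool (E x y)) \<le> real (card C) - 1" if "x \<in> C" for x
  proof -
    have "(\<Sum>y\<in>C. of_bool (E x y)) = real (card (C \<inter> {y. E x y}))"
      using fin by simp
    also have "card (C \<inter> {y. E x y}) \<le> card (C - {x})"
      using fin that assms irreflexive by (intro card_mono) auto
    also have "real (card (C - {x})) = real (card C) - 1"
      using card.remove[OF fin that] by simp
    finally show ?thesis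
      by simp
  qed
  then have "adj_count E C C \<le> (\<Sum>x\<in>C. real (card C) - 1)"
    unfolding adj_count_def by (rule sum_mono)
  then show ?thesis
    by simp
qed

lemma adj_form_indicator:
  assumes "C \<subseteq> V"
  shows "adj_form V E (\<lambda>x. of_bool (x \<in> C)) = adj_count E C C"
proof -
  have "adj_form V E (\<lambda>x. of_bool (x \<in> C)) = (\<Sum>x\<in>C. \<Sum>y\<in>V. of_bool (E x y) * of_bool (y \<in> C))"
    unfolding adj_form_def
    by (rule sum.mono_neutral_cong_right) (use assms finite_vertices in auto)
  also have "\<dots> = adj_count E C C"
    unfolding adj_count_def
    by (intro sum.cong refl sum.mono_neutral_cong_right) (use assms finite_vertices in auto)
  finally show ?thesis .
qed

lemma sum_indicator:
  assumes "C \<subseteq> V"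
  shows "(\<Sum>x\<in>V. of_bool (x \<in> C)) = real (card C)"
    "(\<Sum>x\<in>V. (of_bool (x \<in> C))\<^sup>2) = real (card C)"
proof -
  show "(\<Sum>x\<in>V. of_bool (x \<in> C)) = real (card C)"
    using assms finite_vertices by (simp add: Int_absorb1)
  moreover have "(\<Sum>x\<in>V. (of_bool (x \<in> C))\<^sup>2) = (\<Sum>x\<in>V. of_bool (x \<in> C) :: real)"
    by (intro sum.cong) auto
  ultimately show "(\<Sum>x\<in>V. (of_bool (x \<in> C))\<^sup>2) = real (card C)"
    by simp
qed

lemma adj_count_independent:
  assumes "independent_set V E J"
  shows "adj_count E J J = 0"
  using assms unfolding independent_set_def adj_count_def by simp

lemma singleton_components_independent:
  assumes S: "S \<subseteq> V" and singletons: "\<forall>C\<in>components V E S. card C = 1"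
  shows "independent_set V E (V - S)" "card (V - S) = card (components V E S)"
proof -
  show "independent_set V E (V - S)"
    unfolding independent_set_def
  proof (intro conjI ballI notI)
    fix x y assume x: "x \<in> V - S" and y: "y \<in> V - S" and xy: "E x y"
    define C where "C = conn_rel E (V - S) `` {x}"
    have C: "C \<in> components V E S"
      unfolding C_def components_def using x by (rule quotientI)
    have "x \<in> C"
      unfolding C_def using equiv_class_self[OF equiv_components x] .
    moreover have "y \<in> C"
      using component_closed[OF C \<open>x \<in> C\<close> y xy] .
    ultimately have "x = y"
      using singletons C by (metis card_1_singletonE singletonD)
    then show False
      using irreflexive x xy by blast
  qed auto
  have "card V = card S + (\<Sum>C\<in>components V E S. card C)"
    using sum_over_components[OF S, of "\<lambda>_. 1::nat"] by simp
  then show "card (V - S) = card (components V E S)"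
    using singletons card_Diff_subset[OF finite_subset[OF S finite_vertices] S] by simp
qed

lemma adj_form_component_constant:
  assumes S: "S \<subseteq> V"
    and on_S: "\<And>x. x \<in> S \<Longrightarrow> f x = 1"
    and on_C: "\<And>C x. C \<in> components V E S \<Longrightarrow> x \<in> C \<Longrightarrow> f x = a C"
  shows "adj_form V E f = real d * card S + (\<Sum>C\<in>components V E S.
    2 * a C * adj_count E C S + (a C)\<^sup>2 * adj_count E C C - adj_count E C S)"
proof -
  define h where "h x = (\<Sum>y\<in>V. of_bool (E x y) * f y)" for x
  have h_S: "h x = (\<Sum>y\<in>S. of_bool (E x y)) + (\<Sum>C\<in>components V E S. a C * (\<Sum>y\<in>C. of_bool (E x y)))"
    for x
    unfolding h_def sum_over_components[OF S] using on_S on_C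
    by (simp add: sum_distrib_left mult.commute)
  have h_C: "h x = (\<Sum>y\<in>S. of_bool (E x y)) + a C * (\<Sum>y\<in>C. of_bool (E x y))"
    if "C \<in> components V E S" "x \<in> C" for C x
  proof -
    have "h x = (\<Sum>y\<in>V - S. of_bool (E x y) * f y) + (\<Sum>y\<in>S. of_bool (E x y) * f y)"
      unfolding h_def by (rule sum.subset_diff[OF S finite_vertices])
    also have "(\<Sum>y\<in>V - S. of_bool (E x y) * f y) = a C * (\<Sum>y\<in>C. of_bool (E x y))"
      unfolding sum_adj_component[OF that] sum_distrib_left using on_C[OF that(1)]
      by (simp add: mult.commute)
    finally show ?thesis
      using on_S by simp
  qed
  have sum_S_S: "adj_count E S S = real d * card S - (\<Sum>C\<in>components V E S. adj_count E C S)"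
  proof -
    have "real d * card S = (\<Sum>x\<in>S. \<Sum>y\<in>V. of_bool (E x y))"
      using S sum_adj_eq_degree by (simp add: subset_iff)
    also have "\<dots> = adj_count E S S + (\<Sum>C\<in>components V E S. adj_count E S C)"
      unfolding adj_count_def sum_over_components[OF S] sum.distrib by (subst sum.swap[of _ S]) simp
    finally show ?thesis
      using adj_count_commute by simp
  qed
  have "adj_form V E f = (\<Sum>x\<in>V. f x * h x)"
    unfolding adj_form_def h_def sum_distrib_left by (simp add: mult_ac)
  also have "\<dots> = (\<Sum>x\<in>S. h x) + (\<Sum>C\<in>components V E S. \<Sum>x\<in>C. a C * h x)"
    unfolding sum_over_components[OF S] using on_S on_C by simp
  also have "(\<Sum>x\<in>S. h x) = adj_count E S S + (\<Sum>C\<in>components V E S. a C * adj_count E C S)"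
    unfolding h_S sum.distrib adj_count_def
    by (subst (2) sum.swap) (simp add: sum_distrib_left adj_count_commute[unfolded adj_count_def])
  also have "(\<Sum>C\<in>components V E S. \<Sum>x\<in>C. a C * h x) =
      (\<Sum>C\<in>components V E S. a C * adj_count E C S + (a C)\<^sup>2 * adj_count E C C)"
    unfolding adj_count_def using h_C
    by (intro sum.cong refl) (simp add: sum_distrib_left sum.distrib algebra_simps power2_eq_square)
  finally show ?thesis
    unfolding sum_S_S by (simp add: sum.distrib sum_subtractf sum_distrib_left algebra_simps)
qed

end

section \<open>Hoffman-type bounds\<close>

definition component_weight :: "('a \<Rightarrow> 'a \<Rightarrow> bool) \<Rightarrow> real \<Rightarrow> 'a set \<Rightarrow> 'a set \<Rightarrow> real" where
  "component_weight E c S C =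
    real (card C) * adj_count E C S / (c * real (card C) - adj_count E C S)"

context regular_graph
begin

lemma component_test_vector:
  fixes \<mu> :: real
  assumes S: "S \<subseteq> V" and "0 < \<mu>"
  obtains f
  where "(\<Sum>x\<in>V. f x) = card S - (\<Sum>C\<in>components V E S. component_weight E (real d + \<mu>) S C)"
    and "adj_form V E f + \<mu> * (\<Sum>x\<in>V. (f x)\<^sup>2) = (real d + \<mu>) * (\<Sum>x\<in>V. f x)"
proof -
  let ?K = "components V E S"
  define D where "D C = (real d + \<mu>) * card C - adj_count E C S" for C
  \<comment> \<open>a C minimises D C * t^2 + 2 * adj_count E C S * t, the part of the quadratic form
    that depends on the value t of the test vector on C\<close>
  define a where "a C = - adj_count E C S / D C" for C
  define f where "f x = (if x \<in> S then 1 else a (conn_rel E (V - S) `` {x}))" for x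
  define X where "X = (\<Sum>C\<in>?K. card C * adj_count E C S / D C)"
  have D_eq: "D C = \<mu> * card C + adj_count E C C" if "C \<in> ?K" for C
    using adj_count_component[OF S that] unfolding D_def by (simp add: algebra_simps)
  have D_pos: "0 < D C" if "C \<in> ?K" for C
    unfolding D_eq[OF that] using \<open>0 < \<mu>\<close> card_component_pos[OF that]
    by (simp add: add_pos_nonneg adj_count_nonneg)
  have on_S: "f x = 1" if "x \<in> S" for x
    using that unfolding f_def by simp
  have on_C: "f x = a C" if "C \<in> ?K" "x \<in> C" for C x
    using component_subset[OF that(1)] component_eq_class[OF that] that(2) unfolding f_def by auto
  have sum_f: "(\<Sum>x\<in>V. f x) = card S - X"
    unfolding sum_over_components[OF S] X_def using on_S on_C by (simp add: a_def sum_negf)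
  have component_term: "2 * a C * adj_count E C S + (a C)\<^sup>2 * adj_count E C C - adj_count E C S
      + \<mu> * (card C * (a C)\<^sup>2) = - (real d + \<mu>) * (card C * adj_count E C S / D C)"
    if "C \<in> ?K" for C
  proof -
    have "2 * a C * adj_count E C S + (a C)\<^sup>2 * adj_count E C C - adj_count E C S
        + \<mu> * (card C * (a C)\<^sup>2) = 2 * a C * adj_count E C S + (a C)\<^sup>2 * D C - adj_count E C S"
      unfolding D_eq[OF that] by (simp add: algebra_simps)
    also have "\<dots> = - adj_count E C S * (D C + adj_count E C S) / D C"
      using D_pos[OF that] unfolding a_def by (simp add: field_simps power2_eq_square)
    also have "D C + adj_count E C S = (real d + \<mu>) * card C"
      unfolding D_def by simp
    finally show ?thesis
      by (simp add: algebra_simps)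
  qed
  have "adj_form V E f + \<mu> * (\<Sum>x\<in>V. (f x)\<^sup>2) = (real d + \<mu>) * card S +
      ((\<Sum>C\<in>?K. 2 * a C * adj_count E C S + (a C)\<^sup>2 * adj_count E C C - adj_count E C S) +
       (\<Sum>C\<in>?K. \<mu> * (card C * (a C)\<^sup>2)))"
    using adj_form_component_constant[of S f a, OF S on_S on_C]
    unfolding sum_over_components[OF S] using on_S on_C
    by (simp add: sum_distrib_left algebra_simps)
  also have "\<dots> = (real d + \<mu>) * card S + (\<Sum>C\<in>?K. - (real d + \<mu>) * (card C * adj_count E C S / D C))"
    unfolding sum.distrib[symmetric] using component_term by (simp only: cong: sum.cong)
  also have "\<dots> = (real d + \<mu>) * (\<Sum>x\<in>V. f x)"
    unfolding sum_f X_def mult_minus_left sum_negf sum_distrib_left[symmetric]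
    by (simp add: right_diff_distrib)
  finally show thesis
    using that sum_f unfolding X_def D_def component_weight_def by blast
qed

end

(* For a d-regular graph, hoffman says exactly that the adjacency matrix has no eigenvalue below
   -mu on the orthogonal complement of the constant vectors (split f into its mean and the rest). *)
locale hoffman_graph = regular_graph +
  fixes \<mu> :: real
  assumes mu_pos: "0 < \<mu>"
    and hoffman: "(real d + \<mu>) / card V * (\<Sum>x\<in>V. f x)\<^sup>2 \<le> adj_form V E f + \<mu> * (\<Sum>x\<in>V. (f x)\<^sup>2)"
begin

lemma independent_set_card_le:
  assumes "independent_set V E J"
  shows "(real d + \<mu>) * card J \<le> \<mu> * card V"
proof -
  have J: "J \<subseteq> V"
    using assms unfolding independent_set_def by blast
  have bound: "(real d + \<mu>) / card V * (card J)\<^sup>2 \<le> \<mu> * card J"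
    using hoffman[of "\<lambda>x. of_bool (x \<in> J)"]
    unfolding adj_form_indicator[OF J] adj_count_independent[OF assms] sum_indicator[OF J]
    by simp
  show ?thesis
  proof (cases "card J = 0")
    case False
    moreover have "card J \<le> card V"
      using J finite_vertices by (rule card_mono[rotated])
    ultimately have "((real d + \<mu>) * card J) * card J \<le> (\<mu> * card V) * card J"
      using bound by (simp add: field_simps power2_eq_square)
    then show ?thesis
      using False by (simp add: mult_le_cancel_right)
  qed (simp add: mu_pos less_imp_le)
qed

lemma sum_component_weights_le:
  assumes "S \<subseteq> V"
  shows "(\<Sum>C\<in>components V E S. component_weight E (real d + \<mu>) S C) \<le> card S"
proof -
  obtain f
    where sum_f: "(\<Sum>x\<in>V. f x) = card S - (\<Sum>C\<in>components V E S. component_weight E (real d + \<mu>) S C)"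
    and form: "adj_form V E f + \<mu> * (\<Sum>x\<in>V. (f x)\<^sup>2) = (real d + \<mu>) * (\<Sum>x\<in>V. f x)"
    using component_test_vector[OF assms mu_pos] .
  have "0 \<le> (real d + \<mu>) / card V * (\<Sum>x\<in>V. f x)\<^sup>2"
    using mu_pos by simp
  also have "\<dots> \<le> (real d + \<mu>) * (\<Sum>x\<in>V. f x)"
    using hoffman[of f] unfolding form .
  finally have "0 \<le> (\<Sum>x\<in>V. f x)"
    using mu_pos by (simp add: zero_le_mult_iff)
  then show ?thesis
    unfolding sum_f by simp
qed

end

section \<open>Positive semidefinite kernels\<close>

definition psd_kernel :: "'a set \<Rightarrow> ('a \<Rightarrow> 'a \<Rightarrow> real) \<Rightarrow> bool" where
  "psd_kernel V K \<longleftrightarrow> (\<forall>f. 0 \<le> (\<Sum>x\<in>V. \<Sum>y\<in>V. f x * f y * K x y))"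

lemma psd_kernel_transfer:
  assumes "psd_kernel V K" "\<And>x y. x \<in> V \<Longrightarrow> y \<in> V \<Longrightarrow> K x y = L x y"
  shows "psd_kernel V L"
  unfolding psd_kernel_def
proof
  fix f :: "_ \<Rightarrow> real"
  have "(\<Sum>x\<in>V. \<Sum>y\<in>V. f x * f y * L x y) = (\<Sum>x\<in>V. \<Sum>y\<in>V. f x * f y * K x y)"
    using assms(2) by (intro sum.cong refl) simp
  then show "0 \<le> (\<Sum>x\<in>V. \<Sum>y\<in>V. f x * f y * L x y)"
    using assms(1) unfolding psd_kernel_def by simp
qed

lemma psd_kernel_add:
  "psd_kernel V K \<Longrightarrow> psd_kernel V L \<Longrightarrow> psd_kernel V (\<lambda>x y. K x y + L x y)"
  unfolding psd_kernel_def by (simp add: distrib_left sum.distrib add_nonneg_nonneg)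

lemma psd_kernel_scale:
  "0 \<le> c \<Longrightarrow> psd_kernel V K \<Longrightarrow> psd_kernel V (\<lambda>x y. c * K x y)"
  unfolding psd_kernel_def
  by (simp add: mult.left_commute[of _ c] sum_distrib_left[symmetric] mult_nonneg_nonneg)

lemma psd_kernel_Gram: "psd_kernel V (\<lambda>x y. \<Sum>z\<in>Z. g x z * g y z)"
  unfolding psd_kernel_def
proof
  fix f :: "_ \<Rightarrow> real"
  have "(\<Sum>x\<in>V. \<Sum>y\<in>V. f x * f y * (\<Sum>z\<in>Z. g x z * g y z)) = (\<Sum>z\<in>Z. (\<Sum>x\<in>V. f x * g x z)\<^sup>2)"
    by (simp add: power2_eq_square sum_product sum_distrib_left mult_ac sum.swap[of _ Z])
  then show "0 \<le> (\<Sum>x\<in>V. \<Sum>y\<in>V. f x * f y * (\<Sum>z\<in>Z. g x z * g y z))"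
    by (simp add: sum_nonneg)
qed

lemma psd_kernel_adj_form:
  assumes "finite V" "psd_kernel V K"
    and "\<And>x y. x \<in> V \<Longrightarrow> y \<in> V \<Longrightarrow> K x y = a * of_bool (E x y) + b * of_bool (x = y) + c"
  shows "0 \<le> a * adj_form V E f + b * (\<Sum>x\<in>V. (f x)\<^sup>2) + c * (\<Sum>x\<in>V. f x)\<^sup>2"
  using psd_kernel_transfer[OF assms(2,3)]
  unfolding psd_kernel_def adj_form_kernel_expand[OF assms(1)]
  by blast

section \<open>Kneser graphs\<close>

lemma finite_kneser_vertex: "x \<in> kneser_vertices n k \<Longrightarrow> finite x"
  unfolding kneser_vertices_def by (auto intro: finite_subset)

lemma finite_kneser_vertices: "finite (kneser_vertices n k)"
  unfolding kneser_vertices_def by (rule finite_subset[of _ "Pow {1..n}"]) auto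

lemma card_kneser_vertices: "card (kneser_vertices n k) = n choose k"
  unfolding kneser_vertices_def using n_subsets[of "{1..n}" k] by simp

lemma kneser_vertex_intersection:
  assumes "x \<in> kneser_vertices n k" "y \<in> kneser_vertices n k"
  shows "card (x \<inter> y) \<le> k" "card (x \<inter> y) = 0 \<longleftrightarrow> kneser_adj x y"
    "card (x \<inter> y) = k \<longleftrightarrow> x = y"
proof -
  have fin: "finite x" "finite y" and card: "card x = k" "card y = k"
    using finite_kneser_vertex[OF assms(1)] finite_kneser_vertex[OF assms(2)] assms
    unfolding kneser_vertices_def by auto
  show "card (x \<inter> y) \<le> k"
    using card_mono[OF fin(1), of "x \<inter> y"] card by simp
  show "card (x \<inter> y) = 0 \<longleftrightarrow> kneser_adj x y"
    using fin unfolding kneser_adj_def by simp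
  show "card (x \<inter> y) = k \<longleftrightarrow> x = y"
  proof
    assume "card (x \<inter> y) = k"
    then have "x \<inter> y = x" "x \<inter> y = y"
      using card_subset_eq[OF fin(1), of "x \<inter> y"] card_subset_eq[OF fin(2), of "x \<inter> y"] card
      by auto
    then show "x = y"
      by blast
  qed (use card in simp)
qed

lemma kneser_regular:
  assumes "0 < k"
  shows "regular_graph (kneser_vertices n k) kneser_adj ((n - k) choose k)"
proof
  show "finite (kneser_vertices n k)"
    by (rule finite_kneser_vertices)
  show "symp kneser_adj"
    unfolding kneser_adj_def by (auto intro: sympI)
  show "\<not> kneser_adj x x" if "x \<in> kneser_vertices n k" for x
    using that assms unfolding kneser_vertices_def kneser_adj_def by auto
  show "card {y \<in> kneser_vertices n k. kneser_adj x y} = (n - k) choose k"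
    if x: "x \<in> kneser_vertices n k" for x
  proof -
    have "{y \<in> kneser_vertices n k. kneser_adj x y} = {y. y \<subseteq> {1..n} - x \<and> card y = k}"
      unfolding kneser_vertices_def kneser_adj_def by auto
    moreover have "card ({1..n} - x) = n - k"
      using x finite_kneser_vertex[OF x] unfolding kneser_vertices_def
      by (simp add: card_Diff_subset)
    ultimately show ?thesis
      using n_subsets[of "{1..n} - x" k] by simp
  qed
qed

lemma sum_Pow_Un_disjoint:
  assumes "P \<inter> Q = {}"
  shows "(\<Sum>z\<in>Pow (P \<union> Q). g z) = (\<Sum>a\<in>Pow P. \<Sum>b\<in>Pow Q. g (a \<union> b))"
proof -
  have "(\<Sum>z\<in>Pow (P \<union> Q). g z) = (\<Sum>(a, b)\<in>Pow P \<times> Pow Q. g (a \<union> b))"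
    by (rule sum.reindex_bij_witness[where i = "\<lambda>(a, b). a \<union> b" and j = "\<lambda>z. (z \<inter> P, z \<inter> Q)"])
       (use assms in \<open>auto simp: Int_absorb2 simp flip: Int_Un_distrib\<close>)
  then show ?thesis
    by (simp add: sum.cartesian_product)
qed

lemma sum_Pow_card:
  assumes "finite X"
  shows "(\<Sum>a\<in>Pow X. g (card a)) = (\<Sum>p=0..card X. of_nat (card X choose p) * g p)"
proof -
  have "(\<Sum>a\<in>Pow X. g (card a)) = (\<Sum>p=0..card X. \<Sum>a\<in>{a \<in> Pow X. card a = p}. g (card a))"
    using assms by (intro sum.group[symmetric]) (auto intro: card_mono)
  also have "\<dots> = (\<Sum>p=0..card X. of_nat (card X choose p) * g p)"
    using n_subsets[OF assms] by (intro sum.cong refl) simp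
  finally show ?thesis .
qed

lemma sum_Pow_Venn:
  assumes "x \<subseteq> U" "y \<subseteq> U"
  shows "(\<Sum>z\<in>Pow U. g z) =
    (\<Sum>a1\<in>Pow (x \<inter> y). \<Sum>a2\<in>Pow (x - y). \<Sum>a3\<in>Pow (y - x). \<Sum>a4\<in>Pow (U - (x \<union> y)).
       g (a1 \<union> a2 \<union> a3 \<union> a4))"
proof -
  have "U = ((x \<inter> y) \<union> (x - y)) \<union> ((y - x) \<union> (U - (x \<union> y)))"
    using assms by auto
  moreover have "((x \<inter> y) \<union> (x - y)) \<inter> ((y - x) \<union> (U - (x \<union> y))) = {}"
    by auto
  ultimately have "(\<Sum>z\<in>Pow U. g z) =
    (\<Sum>a\<in>Pow ((x \<inter> y) \<union> (x - y)). \<Sum>b\<in>Pow ((y - x) \<union> (U - (x \<union> y))). g (a \<union> b))"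
    by (metis sum_Pow_Un_disjoint)
  also have "\<dots> = (\<Sum>a1\<in>Pow (x \<inter> y). \<Sum>a2\<in>Pow (x - y). \<Sum>a3\<in>Pow (y - x). \<Sum>a4\<in>Pow (U - (x \<union> y)).
       g ((a1 \<union> a2) \<union> (a3 \<union> a4)))"
  proof -
    have "(x \<inter> y) \<inter> (x - y) = {}" "(y - x) \<inter> (U - (x \<union> y)) = {}"
      by auto
    then show ?thesis
      by (simp only: sum_Pow_Un_disjoint)
  qed
  finally show ?thesis
    by (simp add: Un_assoc)
qed

lemma card_Venn_parts:
  assumes "a1 \<subseteq> x \<inter> y" "a2 \<subseteq> x - y" "a3 \<subseteq> y - x" "a4 \<inter> (x \<union> y) = {}"
    and "finite (a1 \<union> a2 \<union> a3 \<union> a4)"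
  shows "card (a1 \<union> a2 \<union> a3 \<union> a4) = card a1 + card a2 + card a3 + card a4"
    "card (x \<inter> (a1 \<union> a2 \<union> a3 \<union> a4)) = card a1 + card a2"
    "card (y \<inter> (a1 \<union> a2 \<union> a3 \<union> a4)) = card a1 + card a3"
proof -
  have "finite a1" "finite a2" "finite a3" "finite a4"
    using assms(5) by auto
  moreover have "a1 \<inter> a2 = {}" "a1 \<inter> a3 = {}" "(a1 \<union> a2) \<inter> a3 = {}" "(a1 \<union> a2 \<union> a3) \<inter> a4 = {}"
    using assms(1-4) by auto
  moreover have "x \<inter> (a1 \<union> a2 \<union> a3 \<union> a4) = a1 \<union> a2" "y \<inter> (a1 \<union> a2 \<union> a3 \<union> a4) = a1 \<union> a3"
    using assms(1-4) by auto
  ultimately show "card (a1 \<union> a2 \<union> a3 \<union> a4) = card a1 + card a2 + card a3 + card a4"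
    "card (x \<inter> (a1 \<union> a2 \<union> a3 \<union> a4)) = card a1 + card a2"
    "card (y \<inter> (a1 \<union> a2 \<union> a3 \<union> a4)) = card a1 + card a3"
    by (simp_all add: card_Un_disjoint)
qed

(* For |x \<inter> y| = i, the variables p1, p2, p3, p4 are the sizes of the parts of z in x \<inter> y,
   x - y, y - x and outside x \<union> y. *)
definition kneser_kernel :: "nat \<Rightarrow> nat \<Rightarrow> (nat \<Rightarrow> nat \<Rightarrow> real) \<Rightarrow> nat \<Rightarrow> real" where
  "kneser_kernel n k h i =
    (\<Sum>p1=0..i. of_nat (i choose p1) *
     (\<Sum>p2=0..k-i. of_nat ((k-i) choose p2) *
      (\<Sum>p3=0..k-i. of_nat ((k-i) choose p3) *
       (\<Sum>p4=0..n-(2*k-i). of_nat ((n-(2*k-i)) choose p4) *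
         (if p1 + p2 + p3 + p4 = k then h (p1 + p2) (p1 + p3) else 0)))))"

lemma sum_kneser_vertices_intersections:
  assumes x: "x \<in> kneser_vertices n k" and y: "y \<in> kneser_vertices n k"
  shows "(\<Sum>z\<in>kneser_vertices n k. h (card (x \<inter> z)) (card (y \<inter> z))) =
    kneser_kernel n k h (card (x \<inter> y))"
proof -
  define i where "i = card (x \<inter> y)"
  define U where "U = {1..n}"
  define H where "H p1 p2 p3 p4 = (if p1 + p2 + p3 + p4 = k then h (p1 + p2) (p1 + p3) else 0)"
    for p1 p2 p3 p4
  have xU: "x \<subseteq> U" and yU: "y \<subseteq> U" and cx: "card x = k" and cy: "card y = k"
    using x y unfolding kneser_vertices_def U_def by auto
  have fx: "finite x" and fy: "finite y" and fU: "finite U"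
    using x y finite_kneser_vertex unfolding U_def by auto
  have "card (x \<union> y) = 2 * k - i"
    using card_Un_Int[OF fx fy] cx cy unfolding i_def by simp
  then have cards: "card (x \<inter> y) = i" "card (x - y) = k - i" "card (y - x) = k - i"
      "card (U - (x \<union> y)) = n - (2 * k - i)"
    using cx cy fx fy xU yU card_Diff_subset[of "x \<union> y" U] unfolding i_def U_def
    by (auto simp: card_Diff_subset_Int Int_commute)
  have "(\<Sum>z\<in>kneser_vertices n k. h (card (x \<inter> z)) (card (y \<inter> z))) =
      (\<Sum>z\<in>Pow U. if card z = k then h (card (x \<inter> z)) (card (y \<inter> z)) else 0)"
    unfolding kneser_vertices_def U_def using sum.inter_filter[of "Pow {1..n}"]
    by (simp add: Collect_conj_eq)
  also have "\<dots> = (\<Sum>a1\<in>Pow (x \<inter> y). \<Sum>a2\<in>Pow (x - y). \<Sum>a3\<in>Pow (y - x).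
      \<Sum>a4\<in>Pow (U - (x \<union> y)). H (card a1) (card a2) (card a3) (card a4))"
    unfolding sum_Pow_Venn[OF xU yU] H_def
  proof (intro sum.cong refl)
    fix a1 a2 a3 a4
    assume "a1 \<in> Pow (x \<inter> y)" "a2 \<in> Pow (x - y)" "a3 \<in> Pow (y - x)" "a4 \<in> Pow (U - (x \<union> y))"
    then have "a1 \<subseteq> x \<inter> y" "a2 \<subseteq> x - y" "a3 \<subseteq> y - x" "a4 \<inter> (x \<union> y) = {}"
        "finite (a1 \<union> a2 \<union> a3 \<union> a4)"
      using fx fy fU by (auto intro: finite_subset)
    note parts = card_Venn_parts[OF this]
    show "(if card (a1 \<union> a2 \<union> a3 \<union> a4) = k
          then h (card (x \<inter> (a1 \<union> a2 \<union> a3 \<union> a4))) (card (y \<inter> (a1 \<union> a2 \<union> a3 \<union> a4))) else 0) =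
        (if card a1 + card a2 + card a3 + card a4 = k
          then h (card a1 + card a2) (card a1 + card a3) else 0)"
      unfolding parts ..
  qed
  also have "\<dots> = kneser_kernel n k h i"
    unfolding kneser_kernel_def H_def[symmetric]
    using fx fy fU by (subst sum_Pow_card, simp)+ (simp only: cards)
  finally show ?thesis
    unfolding i_def .
qed

lemma psd_kneser_zonal:
  assumes "0 < c" and eigen: "\<And>i. i \<le> k \<Longrightarrow> kneser_kernel n k (\<lambda>r s. \<phi> r * \<phi> s) i = c * \<phi> i"
  shows "psd_kernel (kneser_vertices n k) (\<lambda>x y. \<phi> (card (x \<inter> y)))"
proof -
  have Gram: "psd_kernel (kneser_vertices n k)
      (\<lambda>x y. 1 / c * (\<Sum>z\<in>kneser_vertices n k. \<phi> (card (x \<inter> z)) * \<phi> (card (y \<inter> z))))"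
    using assms by (intro psd_kernel_scale psd_kernel_Gram) simp
  have eq: "1 / c * (\<Sum>z\<in>kneser_vertices n k. \<phi> (card (x \<inter> z)) * \<phi> (card (y \<inter> z))) =
      \<phi> (card (x \<inter> y))" if "x \<in> kneser_vertices n k" "y \<in> kneser_vertices n k" for x y
    using sum_kneser_vertices_intersections[OF that, of "\<lambda>r s. \<phi> r * \<phi> s"]
      eigen[OF kneser_vertex_intersection(1)[OF that]] \<open>0 < c\<close>
    by simp
  show ?thesis
    using psd_kernel_transfer[OF Gram eq] .
qed

section \<open>The Kneser graph K(11,4)\<close>

abbreviation K_11_4 :: "nat set set" where
  "K_11_4 \<equiv> kneser_vertices 11 4"

(* Row j holds, at r = |x \<inter> y|, an integer multiple of the zonal spherical function of the
   Johnson scheme J(11,4) belonging to the adjacency eigenvalue -20, 10, -4, 1 of K(11,4) for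
   j = 1, 2, 3, 4; the constants 924, 105, 420, 210 are the factors c of psd_kneser_zonal. *)
definition zonal_11_4 :: "nat \<Rightarrow> nat \<Rightarrow> real" where
  "zonal_11_4 j r = [[-16, -5, 6, 17, 28], [4, -1, -1, 4, 14], [-16, 11, -10, 5, 140],
    [3, -3, 5, -15, 105]] ! (j - 1) ! r"

lemma psd_zonal_11_4:
  assumes "j \<in> {1..4}"
  shows "psd_kernel K_11_4 (\<lambda>x y. zonal_11_4 j (card (x \<inter> y)))"
proof (rule psd_kneser_zonal)
  have "j \<in> {1, 2, 3, 4}"
    using assms by auto
  then show "0 < [924, 105, 420, 210 :: real] ! (j - 1)"
    by auto
  fix i :: nat assume "i \<le> 4"
  then have "j \<in> {1, 2, 3, 4}" "i \<in> {0, 1, 2, 3, 4}"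
    using assms by auto
  then show "kneser_kernel 11 4 (\<lambda>r s. zonal_11_4 j r * zonal_11_4 j s) i =
      [924, 105, 420, 210] ! (j - 1) * zonal_11_4 j i"
    by (auto simp: kneser_kernel_def zonal_11_4_def numeral_eq_Suc)
qed

(* The kernel A + 20 I - J/6 vanishes on the constants and on the eigenspace of -20, so it is a
   nonnegative combination of the zonal kernels 2, 3, 4; likewise 10 I + 5/66 J - A omits
   zonal kernel 2, the one for the eigenvalue 10. *)
lemma adj_form_kneser_11_4_lower:
  "(\<Sum>x\<in>K_11_4. f x)\<^sup>2 / 6 \<le> adj_form K_11_4 kneser_adj f + 20 * (\<Sum>x\<in>K_11_4. (f x)\<^sup>2)"
proof -
  let ?z = "\<lambda>j x y. zonal_11_4 j (card (x \<inter> y))"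
  have "0 \<le> 1 * adj_form K_11_4 kneser_adj f + 20 * (\<Sum>x\<in>K_11_4. (f x)\<^sup>2) +
      - 1 / 6 * (\<Sum>x\<in>K_11_4. f x)\<^sup>2"
  proof (rule psd_kernel_adj_form[OF finite_kneser_vertices])
    show "psd_kernel K_11_4 (\<lambda>x y. 2/7 * ?z 2 x y + 4/105 * ?z 3 x y + 1/10 * ?z 4 x y)"
      by (intro psd_kernel_add psd_kernel_scale psd_zonal_11_4) auto
    fix x y assume xy: "x \<in> K_11_4" "y \<in> K_11_4"
    then have "card (x \<inter> y) \<in> {0, 1, 2, 3, 4}"
      using kneser_vertex_intersection(1)[OF xy] by auto
    then show "2/7 * ?z 2 x y + 4/105 * ?z 3 x y + 1/10 * ?z 4 x y =
        1 * of_bool (kneser_adj x y) + 20 * of_bool (x = y) + - 1 / 6"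
      unfolding kneser_vertex_intersection(2,3)[OF xy, symmetric] by (auto simp: zonal_11_4_def)
  qed
  then show ?thesis
    by simp
qed

lemma adj_form_kneser_11_4_upper:
  "adj_form K_11_4 kneser_adj f \<le> 10 * (\<Sum>x\<in>K_11_4. (f x)\<^sup>2) + 5 / 66 * (\<Sum>x\<in>K_11_4. f x)\<^sup>2"
proof -
  let ?z = "\<lambda>j x y. zonal_11_4 j (card (x \<inter> y))"
  have "0 \<le> - 1 * adj_form K_11_4 kneser_adj f + 10 * (\<Sum>x\<in>K_11_4. (f x)\<^sup>2) +
      5 / 66 * (\<Sum>x\<in>K_11_4. f x)\<^sup>2"
  proof (rule psd_kernel_adj_form[OF finite_kneser_vertices])
    show "psd_kernel K_11_4 (\<lambda>x y. 5/154 * ?z 1 x y + 1/30 * ?z 3 x y + 3/70 * ?z 4 x y)"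
      by (intro psd_kernel_add psd_kernel_scale psd_zonal_11_4) auto
    fix x y assume xy: "x \<in> K_11_4" "y \<in> K_11_4"
    then have "card (x \<inter> y) \<in> {0, 1, 2, 3, 4}"
      using kneser_vertex_intersection(1)[OF xy] by auto
    then show "5/154 * ?z 1 x y + 1/30 * ?z 3 x y + 3/70 * ?z 4 x y =
        - 1 * of_bool (kneser_adj x y) + 10 * of_bool (x = y) + 5 / 66"
      unfolding kneser_vertex_intersection(2,3)[OF xy, symmetric] by (auto simp: zonal_11_4_def)
  qed
  then show ?thesis
    by simp
qed

interpretation K_11_4: hoffman_graph K_11_4 kneser_adj 35 20
proof -
  interpret regular_graph K_11_4 kneser_adj 35
    using kneser_regular[of 4 11] by (simp add: numeral_eq_Suc)
  show "hoffman_graph K_11_4 kneser_adj 35 20"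
    by unfold_locales
      (use adj_form_kneser_11_4_lower in \<open>simp_all add: card_kneser_vertices numeral_eq_Suc\<close>)
qed

lemma kneser_11_4_cubic_bound:
  fixes m :: real
  assumes "3 \<le> m" "m \<le> 294"
  shows "(10 * m + 5 / 66 * m\<^sup>2) * (4 * m + 7) < 140 * m * (m - 1)"
proof -
  have "140 * m * (m - 1) - (10 * m + 5 / 66 * m\<^sup>2) * (4 * m + 7) =
      5 * m / 66 * (4 * ((m - 3) * (294 - m)) + 125 * m + 756)"
    by (simp add: field_simps power2_eq_square)
  moreover have "0 \<le> (m - 3) * (294 - m)"
    using assms by (intro mult_nonneg_nonneg) auto
  then have "0 < 4 * ((m - 3) * (294 - m)) + 125 * m + 756"
    using assms by linarith
  then have "0 < 5 * m / 66 * (4 * ((m - 3) * (294 - m)) + 125 * m + 756)"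
    by (intro mult_pos_pos) (use assms in auto)
  ultimately show ?thesis
    by linarith
qed

lemma kneser_11_4_weight_arith:
  fixes n :: nat and e :: real
  assumes n: "1 \<le> n" "n \<le> 294"
    and e: "0 \<le> e" "e \<le> real n * (real n - 1)" "e \<le> 10 * real n + 5 / 66 * (real n)\<^sup>2"
  shows "7 / 4 \<le> real n * (35 * real n - e) / (20 * real n + e)"
    and "2 \<le> n \<Longrightarrow> 7 / 4 < real n * (35 * real n - e) / (20 * real n + e)"
proof -
  have pos: "0 < 20 * real n + e"
    using n e by simp
  have diff: "real n * (35 * real n - e) =
      7 / 4 * (20 * real n + e) + (140 * real n * (real n - 1) - e * (4 * real n + 7)) / 4"
    by (simp add: field_simps)
  have strict: "e * (4 * real n + 7) < 140 * real n * (real n - 1)" if "2 \<le> n"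
  proof (cases "n = 2")
    case False
    have "e * (4 * real n + 7) \<le> (10 * real n + 5 / 66 * (real n)\<^sup>2) * (4 * real n + 7)"
      using e(3) by (intro mult_right_mono) auto
    also have "\<dots> < 140 * real n * (real n - 1)"
      using False that n(2) by (intro kneser_11_4_cubic_bound) auto
    finally show ?thesis .
  qed (use e in simp)
  have weak: "e * (4 * real n + 7) \<le> 140 * real n * (real n - 1)"
  proof (cases "n = 1")
    case False
    then show ?thesis
      using strict n(1) by (simp add: less_imp_le)
  qed (use e in simp)
  show "7 / 4 \<le> real n * (35 * real n - e) / (20 * real n + e)"
    unfolding pos_le_divide_eq[OF pos] diff using weak by simp
  show "7 / 4 < real n * (35 * real n - e) / (20 * real n + e)" if "2 \<le> n"
    unfolding pos_less_divide_eq[OF pos] diff using strict[OF that] by simp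
qed

lemma kneser_11_4_component_weight:
  assumes cut: "vertex_cut K_11_4 kneser_adj S" and C: "C \<in> components K_11_4 kneser_adj S"
  shows "7 / 4 \<le> component_weight kneser_adj 55 S C"
    and "2 \<le> card C \<Longrightarrow> 7 / 4 < component_weight kneser_adj 55 S C"
proof -
  have S: "S \<subseteq> K_11_4" and two: "2 \<le> card (components K_11_4 kneser_adj S)"
    using cut unfolding vertex_cut_def num_components_def components_def by auto
  have CV: "C \<subseteq> K_11_4"
    using K_11_4.component_subset[OF C] by blast
  have "card C + 35 + 1 \<le> 330"
    using K_11_4.card_component_le[OF two C] by (simp add: card_kneser_vertices numeral_eq_Suc)
  moreover have "adj_count kneser_adj C C \<le> 10 * real (card C) + 5 / 66 * (real (card C))\<^sup>2"
    using adj_form_kneser_11_4_upper[of "\<lambda>x. of_bool (x \<in> C)"]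
    unfolding K_11_4.adj_form_indicator[OF CV] K_11_4.sum_indicator[OF CV] .
  moreover have "adj_count kneser_adj C S = 35 * real (card C) - adj_count kneser_adj C C"
    using K_11_4.adj_count_component[OF S C] by simp
  then have "component_weight kneser_adj 55 S C = real (card C) * (35 * real (card C) -
      adj_count kneser_adj C C) / (20 * real (card C) + adj_count kneser_adj C C)"
    unfolding component_weight_def by (simp only:) (simp add: algebra_simps)
  ultimately show "7 / 4 \<le> component_weight kneser_adj 55 S C"
    and "2 \<le> card C \<Longrightarrow> 7 / 4 < component_weight kneser_adj 55 S C"
    using kneser_11_4_weight_arith[of "card C" "adj_count kneser_adj C C"]
      adj_count_nonneg K_11_4.adj_count_le[OF CV] K_11_4.card_component_pos[OF C]
    by auto
qed

lemma kneser_11_4_cut_bound: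
  assumes cut: "vertex_cut K_11_4 kneser_adj S"
  shows "7 / 4 * num_components K_11_4 kneser_adj S \<le> card S"
    and "7 / 4 * num_components K_11_4 kneser_adj S = card S \<Longrightarrow>
      \<forall>C\<in>components K_11_4 kneser_adj S. card C = 1"
proof -
  let ?K = "components K_11_4 kneser_adj S"
  have S: "S \<subseteq> K_11_4"
    using cut unfolding vertex_cut_def by blast
  have sum_le: "(\<Sum>C\<in>?K. component_weight kneser_adj 55 S C) \<le> card S"
    using K_11_4.sum_component_weights_le[OF S] by simp
  have num: "7 / 4 * num_components K_11_4 kneser_adj S = (\<Sum>C\<in>?K. 7 / 4)"
    unfolding num_components_def components_def by simp
  also have "\<dots> \<le> (\<Sum>C\<in>?K. component_weight kneser_adj 55 S C)"
    using kneser_11_4_component_weight(1)[OF cut] by (rule sum_mono)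
  finally show "7 / 4 * num_components K_11_4 kneser_adj S \<le> card S"
    using sum_le by linarith
  show "\<forall>C\<in>?K. card C = 1" if "7 / 4 * num_components K_11_4 kneser_adj S = card S"
  proof (rule ccontr)
    assume "\<not> (\<forall>C\<in>?K. card C = 1)"
    then obtain C where C: "C \<in> ?K" "card C \<noteq> 1"
      by blast
    moreover have "0 < card C"
      using K_11_4.card_component_pos[OF C(1)] .
    ultimately have "C \<in> ?K" "2 \<le> card C"
      by auto
    then have "(\<Sum>C\<in>?K. 7 / 4) < (\<Sum>C\<in>?K. component_weight kneser_adj 55 S C)"
      using K_11_4.finite_components kneser_11_4_component_weight[OF cut]
      by (intro sum_strict_mono_ex1) auto
    then show False
      using sum_le that unfolding num by linarith
  qed
qed

lemma kneser_11_4_star: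
  "independent_set K_11_4 kneser_adj {x \<in> K_11_4. 1 \<in> x}" "card {x \<in> K_11_4. 1 \<in> x} = 120"
proof -
  show "independent_set K_11_4 kneser_adj {x \<in> K_11_4. 1 \<in> x}"
    unfolding independent_set_def kneser_adj_def by auto
  have "K_11_4 - {x \<in> K_11_4. 1 \<in> x} = {x. x \<subseteq> {2..11} \<and> card x = 4}"
    unfolding kneser_vertices_def by (auto simp: subset_eq Suc_le_eq le_less)
  then have "card (K_11_4 - {x \<in> K_11_4. 1 \<in> x}) = 210"
    using n_subsets[of "{2..11::nat}" 4] by (simp add: numeral_eq_Suc)
  moreover have "finite K_11_4"
    by (rule K_11_4.finite_vertices)
  ultimately show "card {x \<in> K_11_4. 1 \<in> x} = 120"
    using card_Diff_subset[of "{x \<in> K_11_4. 1 \<in> x}" K_11_4]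
      card_mono[of K_11_4 "{x \<in> K_11_4. 1 \<in> x}"]
    by (simp add: card_kneser_vertices numeral_eq_Suc)
qed

lemma kneser_11_4_independent_set_card_le:
  "independent_set K_11_4 kneser_adj J \<Longrightarrow> card J \<le> 120"
  using K_11_4.independent_set_card_le[of J] by (simp add: card_kneser_vertices numeral_eq_Suc)

lemma toughness_kneser_11_4: "toughness K_11_4 kneser_adj = 7 / 4"
proof -
  let ?I = "{x \<in> K_11_4. 1 \<in> x}"
  have "num_components K_11_4 kneser_adj (K_11_4 - ?I) = card ((\<lambda>x. {x}) ` ?I)"
    using components_complement_independent[OF kneser_11_4_star(1)]
    unfolding num_components_def components_def by simp
  also have "\<dots> = 120"
    using kneser_11_4_star(2) by (simp add: card_image)
  finally have components: "num_components K_11_4 kneser_adj (K_11_4 - ?I) = 120" .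
  have "card (K_11_4 - ?I) = 210"
    using card_Diff_subset[of ?I K_11_4] K_11_4.finite_vertices kneser_11_4_star(2)
    by (simp add: card_kneser_vertices numeral_eq_Suc)
  then have tight: "vertex_cut K_11_4 kneser_adj (K_11_4 - ?I)
      \<and> real (card (K_11_4 - ?I)) / real (num_components K_11_4 kneser_adj (K_11_4 - ?I)) = 7 / 4"
    unfolding vertex_cut_def components by simp
  show ?thesis
    unfolding toughness_def
  proof (rule cInf_eq_minimum)
    show "7 / 4 \<in> {real (card S) / real (num_components K_11_4 kneser_adj S) |S.
        vertex_cut K_11_4 kneser_adj S}"
      using tight by force
  next
    fix r
    assume "r \<in> {real (card S) / real (num_components K_11_4 kneser_adj S) |S.
        vertex_cut K_11_4 kneser_adj S}"
    then obtain S where r: "r = real (card S) / real (num_components K_11_4 kneser_adj S)"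
      and cut: "vertex_cut K_11_4 kneser_adj S"
      by blast
    have "0 < real (num_components K_11_4 kneser_adj S)"
      using cut unfolding vertex_cut_def by simp
    then show "7 / 4 \<le> r"
      unfolding r using kneser_11_4_cut_bound(1)[OF cut] by (simp add: pos_le_divide_eq)
  qed
qed

lemma kneser_11_4_tight_cut:
  assumes cut: "vertex_cut K_11_4 kneser_adj S"
    and ratio: "real (card S) / real (num_components K_11_4 kneser_adj S) = 7 / 4"
  shows "maximum_independent_set K_11_4 kneser_adj (K_11_4 - S)"
proof -
  have S: "S \<subseteq> K_11_4" and "0 < num_components K_11_4 kneser_adj S"
    using cut unfolding vertex_cut_def by auto
  then have tight: "7 / 4 * num_components K_11_4 kneser_adj S = card S"
    using ratio by (simp add: divide_eq_eq)
  have singletons: "\<forall>C\<in>components K_11_4 kneser_adj S. card C = 1"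
    by (rule kneser_11_4_cut_bound(2)[OF cut tight])
  have indep: "independent_set K_11_4 kneser_adj (K_11_4 - S)"
    and "card (K_11_4 - S) = num_components K_11_4 kneser_adj S"
    using K_11_4.singleton_components_independent[OF S singletons]
    unfolding num_components_def components_def by auto
  moreover have "card S + card (K_11_4 - S) = 330"
    using card_Diff_subset[OF finite_subset[OF S K_11_4.finite_vertices] S]
      card_mono[OF K_11_4.finite_vertices S]
    by (simp add: card_kneser_vertices numeral_eq_Suc)
  ultimately have "card (K_11_4 - S) = 120"
    using tight by linarith
  then show ?thesis
    unfolding maximum_independent_set_def using indep kneser_11_4_independent_set_card_le by auto
qed

theorem theorem5p3:
  shows "toughness (kneser_vertices 11 4) kneser_adj = 7 / 4 \<and>
    (\<forall>S. vertex_cut (kneser_vertices 11 4) kneser_adj S \<and>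
         real (card S) / real (num_components (kneser_vertices 11 4) kneser_adj S) = 7 / 4
       \<longrightarrow> (\<exists>I. maximum_independent_set (kneser_vertices 11 4) kneser_adj I \<and>
                 S = kneser_vertices 11 4 - I))"
proof (intro conjI allI impI)
  show "toughness (kneser_vertices 11 4) kneser_adj = 7 / 4"
    by (rule toughness_kneser_11_4)
next
  fix S
  assume "vertex_cut (kneser_vertices 11 4) kneser_adj S \<and>
    real (card S) / real (num_components (kneser_vertices 11 4) kneser_adj S) = 7 / 4"
  then have "maximum_independent_set K_11_4 kneser_adj (K_11_4 - S)" "S \<subseteq> K_11_4"
    using kneser_11_4_tight_cut unfolding vertex_cut_def by auto
  then show "\<exists>I. maximum_independent_set (kneser_vertices 11 4) kneser_adj I \<and>
      S = kneser_vertices 11 4 - I"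
    by (intro exI[of _ "K_11_4 - S"]) auto
qed

end
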